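(* Let $N=p^n$ with $p\ge5$ prime and $n\ge2$. Let $\mathbf{s}$ be a Zadoff–Chu sequence of length $N$ and let $\pi(x)=f_2x^2+f_1x+f_0$ be a quadratic permutation polynomial over $\mathbb{Z}_N$ (with $f_2\ne0$ in $\mathbb{Z}_N$). Then the CAZAC sequences $\mathbf{s}\circ\pi$ and $\mathbf{s}\circ\pi^{-1}$ are both inequivalent to ZC sequences, i.e., neither lies in the equivalence class of any Zadoff–Chu sequence of length $N$.
   Context: $\xi_N=e^{-2\pi\sqrt{-1}/N}$, $\xi_N^{x/2}=e^{-\pi\sqrt{-1}x/N}$. A Zadoff–Chu sequence of length $N$ is $s(k)=\xi_N^{u(k^2+(N\bmod2)k+2lk)/2}$, $0\le k<N$, with $\gcd(u,N)=1$, $l$ an integer. A permutation polynomial over $\mathbb{Z}_N$ induces a bijection $k\mapsto \pi(k)\bmod N$ of $\mathbb{Z}_N$; $\pi^{-1}$ is the inverse permutation; $(\mathbf{s}\circ\sigma)(k)=s(\sigma(k))$. The equivalence class of a length-$N$ sequence $\mathbf{x}$ is the set of all sequences obtained from $\mathbf{x}$ by composing the operations: rotation $y(k)=c\,x(k)$ with $|c|=1$; translation $y(k)=x(k+d\bmod N)$ for an integer $d$; decimation $y(k)=x(ak\bmod N)$ with $\gcd(a,N)=1$; linear frequency modulation $y(k)=\xi_N^{lk}x(k)$ for an integer $l$; conjugation $y(k)=x^*(k)$. *)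

theory Defs
  imports "HOL-Analysis.Analysis" "HOL-Computational_Algebra.Primes"
begin

text \<open>Sequences of length N are functions nat => complex; only indices k < N matter.\<close>

text \<open>xi_N^(x/2) = exp(-pi i x / N)\<close>
definition xi_half :: "nat \<Rightarrow> int \<Rightarrow> complex" where
  "xi_half N x = exp (- (pi * \<i> * of_int x / of_nat N))"

definition zc :: "nat \<Rightarrow> int \<Rightarrow> int \<Rightarrow> nat \<Rightarrow> complex" where
  "zc N u l k = xi_half N (u * (int k ^ 2 + int (N mod 2) * int k + 2 * l * int k))"

definition is_zc :: "nat \<Rightarrow> (nat \<Rightarrow> complex) \<Rightarrow> bool" where
  "is_zc N s \<longleftrightarrow> (\<exists>u l. coprime u (int N) \<and> (\<forall>k<N. s k = zc N u l k))"

inductive in_class :: "nat \<Rightarrow> (nat \<Rightarrow> complex) \<Rightarrow> (nat \<Rightarrow> complex) \<Rightarrow> bool"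
  for N :: nat and x :: "nat \<Rightarrow> complex" where
  base: "(\<forall>k<N. y k = x k) \<Longrightarrow> in_class N x y"
| rotation: "in_class N x z \<Longrightarrow> cmod c = 1 \<Longrightarrow> (\<forall>k<N. y k = c * z k) \<Longrightarrow> in_class N x y"
| translation: "in_class N x z \<Longrightarrow> (\<forall>k<N. y k = z (nat ((int k + d) mod int N)))
     \<Longrightarrow> in_class N x y"
| decimation: "in_class N x z \<Longrightarrow> coprime a (int N) \<Longrightarrow>
     (\<forall>k<N. y k = z (nat ((a * int k) mod int N))) \<Longrightarrow> in_class N x y"
| modulation: "in_class N x z \<Longrightarrow> (\<forall>k<N. y k = xi_half N (2 * l * int k) * z k)
     \<Longrightarrow> in_class N x y"
| conjugation: "in_class N x z \<Longrightarrow> (\<forall>k<N. y k = cnj (z k)) \<Longrightarrow> in_class N x y"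

definition qpoly :: "nat \<Rightarrow> int \<Rightarrow> int \<Rightarrow> int \<Rightarrow> nat \<Rightarrow> nat" where
  "qpoly N f2 f1 f0 k = nat ((f2 * int k ^ 2 + f1 * int k + f0) mod int N)"

definition perm_inv :: "nat \<Rightarrow> (nat \<Rightarrow> nat) \<Rightarrow> nat \<Rightarrow> nat" where
  "perm_inv N \<sigma> = the_inv_into {..<N} \<sigma>"

end

theory Submission
  imports Defs
begin

text \<open>Call \<open>y\<close> a chirp if \<open>y k = c \<xi>\<^sub>N\<^bsup>(A k\<^sup>2 + B k)/2\<^esup>\<close> with \<open>|c| = 1\<close>, \<open>gcd(A, N) = 1\<close> and \<open>A + B\<close>
  even. For odd \<open>N\<close> all five equivalence operations preserve this shape and ZC sequences are
  chirps, so every sequence equivalent to a ZC sequence is a chirp. Both claims then say that a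
  chirp composed with \<open>\<pi>\<close> is a chirp (for \<open>s \<circ> \<pi>\<^sup>-\<^sup>1\<close> compose with \<open>\<pi>\<close> to get back \<open>s\<close>).
  Comparing phases, the quartic \<open>\<alpha> \<pi>(k)\<^sup>2 + \<beta> \<pi>(k) - \<gamma> k\<^sup>2 - \<delta> k\<close> is then constant modulo \<open>N\<close>;
  its fourth and third finite differences give \<open>N | 24 \<alpha> f\<^sub>2\<^sup>2\<close> and \<open>N | 12 \<alpha> f\<^sub>2 f\<^sub>1 + 36 \<alpha> f\<^sub>2\<^sup>2\<close>,
  hence \<open>N | f\<^sub>2\<^sup>2\<close> and \<open>N | f\<^sub>2 f\<^sub>1\<close> because \<open>gcd(6 \<alpha>, N) = 1\<close>. Since \<open>\<pi>\<close> also permutes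
  \<open>\<int>\<^sub>p\<close>, \<open>p\<close> cannot divide both \<open>f\<^sub>2\<close> and \<open>f\<^sub>1\<close>; so \<open>f\<^sub>1\<close> is a unit modulo \<open>N\<close> and
  \<open>N | f\<^sub>2\<close>, contradicting \<open>f\<^sub>2 \<noteq> 0\<close> in \<open>\<int>\<^sub>N\<close>.\<close>

lemma xi_half_add: "xi_half N (x + y) = xi_half N x * xi_half N y"
  unfolding xi_half_def by (simp add: distrib_left add_divide_distrib exp_add[symmetric] algebra_simps)

lemma norm_xi_half [simp]: "cmod (xi_half N x) = 1"
  unfolding xi_half_def by (simp add: norm_exp_eq_Re)

lemma cnj_xi_half: "cnj (xi_half N x) = xi_half N (- x)"
  unfolding xi_half_def by (simp add: exp_cnj)

lemma xi_half_eq_iff: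
  assumes "N > 0"
  shows "xi_half N x = xi_half N y \<longleftrightarrow> 2 * int N dvd x - y"
proof -
  have pi_i: "pi * \<i> \<noteq> 0"
    by (simp add: pi_neq_zero)
  have exponent_eq: "- (pi * \<i> * of_int x / of_nat N) = - (pi * \<i> * of_int y / of_nat N) + of_int (2 * j) * pi * \<i>
      \<longleftrightarrow> x - y = 2 * int N * (- j)" for j :: int
  proof -
    have "- (pi * \<i> * of_int x / of_nat N) = - (pi * \<i> * of_int y / of_nat N) + of_int (2 * j) * pi * \<i>
        \<longleftrightarrow> (pi * \<i>) * of_int y = (pi * \<i>) * of_int (x + 2 * int N * j)"
      using assms by (auto simp: field_simps)
    also have "\<dots> \<longleftrightarrow> x - y = 2 * int N * (- j)"
      unfolding mult_cancel_left of_int_eq_iff using pi_i by auto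
    finally show ?thesis .
  qed
  have "xi_half N x = xi_half N y \<longleftrightarrow> (\<exists>j. x - y = 2 * int N * (- j))"
    unfolding xi_half_def exp_eq exponent_eq ..
  also have "\<dots> \<longleftrightarrow> 2 * int N dvd x - y"
    unfolding dvd_def by (metis minus_minus)
  finally show ?thesis .
qed

lemma xi_half_proportional_dvd:
  assumes "N > 0" "xi_half N x = c * xi_half N y" "xi_half N x' = c * xi_half N y'"
  shows "2 * int N dvd (x - y) - (x' - y')"
proof -
  have "xi_half N (x - y) = c" if "xi_half N x = c * xi_half N y" for x y
  proof -
    have "xi_half N (x - y) * xi_half N y = c * xi_half N y"
      using that xi_half_add[of N "x - y" y] by (metis diff_add_cancel)
    moreover have "xi_half N y \<noteq> 0"
      by (metis norm_xi_half norm_zero zero_neq_one)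
    ultimately show ?thesis by simp
  qed
  then show ?thesis
    using assms xi_half_eq_iff by metis
qed

lemma xi_half_quadratic_cong:
  assumes "odd N" "even (A + B)" "m mod int N = k mod int N"
  shows "xi_half N (A * m ^ 2 + B * m) = xi_half N (A * k ^ 2 + B * k)"
proof -
  obtain j where j: "m - k = int N * j"
    using assms(3) mod_eq_dvd_iff dvd_def by metis
  have "even (j * (A * (m + k) + B))"
  proof (cases "even j")
    case False
    then have "odd (m - k)"
      using j assms(1) by simp
    then have "odd (m + k)"
      by (metis add.commute diff_add_cancel even_add mult_2 add.assoc)
    then show ?thesis
      using assms(2) by auto
  qed simp
  then obtain h where h: "j * (A * (m + k) + B) = 2 * h" ..
  have "(A * m ^ 2 + B * m) - (A * k ^ 2 + B * k) = (m - k) * (A * (m + k) + B)"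
    by (simp add: algebra_simps power2_eq_square)
  also have "\<dots> = 2 * int N * h"
    using j h by (metis mult.assoc mult.left_commute)
  finally show ?thesis
    unfolding xi_half_eq_iff[OF odd_pos[OF assms(1)]] by simp
qed

text \<open>For odd \<open>N\<close>, the parity of \<open>A + B\<close> makes the phase depend only on \<open>k mod N\<close>
  (\<open>chirp_at_mod\<close>).\<close>
definition is_chirp :: "nat \<Rightarrow> (nat \<Rightarrow> complex) \<Rightarrow> bool" where
  "is_chirp N y \<longleftrightarrow> (\<exists>c A B. cmod c = 1 \<and> coprime A (int N) \<and> even (A + B) \<and>
      (\<forall>k<N. y k = c * xi_half N (A * int k ^ 2 + B * int k)))"

lemma chirp_at_mod:
  assumes "odd N" "even (A + B)" "\<forall>k<N. y k = c * xi_half N (A * int k ^ 2 + B * int k)"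
  shows "y (nat (m mod int N)) = c * xi_half N (A * m ^ 2 + B * m)"
proof -
  have N: "int N > 0"
    using assms(1) by (simp add: odd_pos)
  let ?r = "nat (m mod int N)"
  have r: "?r < N" "int ?r = m mod int N"
    using N by (auto simp: nat_less_iff)
  then have "y ?r = c * xi_half N (A * int ?r ^ 2 + B * int ?r)"
    using assms(3) by simp
  also have "xi_half N (A * int ?r ^ 2 + B * int ?r) = xi_half N (A * m ^ 2 + B * m)"
    using r(2) by (intro xi_half_quadratic_cong[OF assms(1,2)]) simp
  finally show ?thesis .
qed

lemma chirp_rotation:
  assumes "is_chirp N z" "cmod c = 1" "\<forall>k<N. y k = c * z k"
  shows "is_chirp N y"
proof -
  obtain c' A B where "cmod c' = 1" "coprime A (int N)" "even (A + B)"
    "\<forall>k<N. z k = c' * xi_half N (A * int k ^ 2 + B * int k)"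
    using assms(1) unfolding is_chirp_def by blast
  with assms(2,3) show ?thesis
    unfolding is_chirp_def by (intro exI[of _ "c * c'"] exI[of _ A] exI[of _ B]) (simp add: norm_mult)
qed

lemma chirp_affine_reindex:
  assumes "odd N" "is_chirp N z" "coprime a (int N)"
    and "\<forall>k<N. y k = z (nat ((a * int k + d) mod int N))"
  shows "is_chirp N y"
proof -
  obtain c A B where c: "cmod c = 1" and A: "coprime A (int N)" and AB: "even (A + B)"
    and z: "\<forall>k<N. z k = c * xi_half N (A * int k ^ 2 + B * int k)"
    using assms(2) unfolding is_chirp_def by blast
  define c' where "c' = c * xi_half N (A * d ^ 2 + B * d)"
  have "y k = c' * xi_half N ((A * a ^ 2) * int k ^ 2 + (2 * A * a * d + B * a) * int k)"
    if "k < N" for k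
  proof -
    have "y k = c * xi_half N (A * (a * int k + d) ^ 2 + B * (a * int k + d))"
      using assms(4) chirp_at_mod[OF assms(1) AB z] that by simp
    also have "A * (a * int k + d) ^ 2 + B * (a * int k + d)
        = (A * d ^ 2 + B * d) + ((A * a ^ 2) * int k ^ 2 + (2 * A * a * d + B * a) * int k)"
      by (simp add: algebra_simps power2_eq_square)
    finally show ?thesis
      by (simp add: c'_def xi_half_add)
  qed
  moreover have "cmod c' = 1"
    by (simp add: c'_def norm_mult c)
  moreover have "coprime (A * a ^ 2) (int N)"
    using A assms(3) by simp
  moreover have "even (A * a ^ 2 + (2 * A * a * d + B * a))"
    using AB by (cases "even a") auto
  ultimately show ?thesis
    unfolding is_chirp_def by blast
qed

lemma chirp_modulation:
  assumes "is_chirp N z" "\<forall>k<N. y k = xi_half N (2 * l * int k) * z k"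
  shows "is_chirp N y"
proof -
  obtain c A B where "cmod c = 1" "coprime A (int N)" and AB: "even (A + B)"
    and z: "\<forall>k<N. z k = c * xi_half N (A * int k ^ 2 + B * int k)"
    using assms(1) unfolding is_chirp_def by blast
  moreover have "y k = c * xi_half N (A * int k ^ 2 + (B + 2 * l) * int k)" if "k < N" for k
    using assms(2) z that by (simp add: xi_half_add[symmetric] algebra_simps)
  moreover have "even (A + (B + 2 * l))"
    using AB by simp
  ultimately show ?thesis
    unfolding is_chirp_def by blast
qed

lemma chirp_conjugation:
  assumes "is_chirp N z" "\<forall>k<N. y k = cnj (z k)"
  shows "is_chirp N y"
proof -
  obtain c A B where "cmod c = 1" "coprime A (int N)" "even (A + B)"
    and z: "\<forall>k<N. z k = c * xi_half N (A * int k ^ 2 + B * int k)"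
    using assms(1) unfolding is_chirp_def by blast
  moreover have "y k = cnj c * xi_half N ((- A) * int k ^ 2 + (- B) * int k)" if "k < N" for k
    using assms(2) z that by (simp add: cnj_xi_half)
  ultimately show ?thesis
    unfolding is_chirp_def by (intro exI[of _ "cnj c"] exI[of _ "- A"] exI[of _ "- B"]) simp
qed

lemma in_class_chirp:
  assumes "odd N" "in_class N x y" "is_chirp N x"
  shows "is_chirp N y"
  using assms(2)
proof (induction rule: in_class.induct)
  case (base y)
  then show ?case
    using assms(3) unfolding is_chirp_def by auto
next
  case (rotation z c y)
  then show ?case
    by (blast intro: chirp_rotation)
next
  case (translation z y d)
  then show ?case
    using chirp_affine_reindex[OF assms(1), of z 1 y d] by simp
next
  case (decimation z a y)
  then show ?case
    using chirp_affine_reindex[OF assms(1), of z a y 0] by simp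
next
  case (modulation z y l)
  then show ?case
    by (blast intro: chirp_modulation)
next
  case (conjugation z y)
  then show ?case
    by (blast intro: chirp_conjugation)
qed

lemma zc_odd_eq: "odd N \<Longrightarrow> zc N u l k = xi_half N (u * int k ^ 2 + u * (1 + 2 * l) * int k)"
  unfolding zc_def by (simp add: odd_iff_mod_2_eq_one algebra_simps)

lemma zc_chirp:
  assumes "odd N" "coprime u (int N)"
  shows "is_chirp N (zc N u l)"
proof -
  have "even (u + u * (1 + 2 * l))"
    by (simp add: algebra_simps)
  with assms show ?thesis
    unfolding is_chirp_def zc_odd_eq[OF assms(1)]
    by (intro exI[of _ 1] exI[of _ u] exI[of _ "u * (1 + 2 * l)"]) simp
qed

lemma is_zc_chirp: "odd N \<Longrightarrow> is_zc N t \<Longrightarrow> is_chirp N t"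
  unfolding is_zc_def using zc_chirp chirp_rotation[of N _ 1 t] by fastforce

lemma coprime_6_prime_power:
  assumes "prime p" "5 \<le> p"
  shows "coprime 6 (int p ^ n)"
proof -
  have "\<not> p dvd 6"
  proof
    assume "p dvd 6"
    then have "p dvd 2 \<or> p dvd 3"
      using prime_dvd_mult_iff[OF assms(1), of 2 3] by simp
    then have "p \<le> 3"
      by (auto dest: dvd_imp_le)
    with assms(2) show False
      by simp
  qed
  then have "\<not> int p dvd 6"
    by (metis int_dvd_int_iff of_nat_numeral)
  then have "coprime (int p) 6"
    using assms(1) by (simp add: prime_imp_coprime)
  then show ?thesis
    by (simp add: coprime_commute)
qed

lemma odd_if_coprime_6:
  assumes "coprime 6 (int N)"
  shows "odd N"
proof
  assume "even N"
  then have "is_unit (2 :: int)"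
    using coprime_common_divisor[OF assms, of 2] by simp
  then show False
    by simp
qed

lemma quartic_congruences_dvd_coeffs:
  fixes N \<alpha> \<beta> \<gamma> \<delta> f2 f1 f0 :: int
  assumes "coprime \<alpha> N" "coprime 6 N"
    and D: "\<And>m. D m = \<alpha> * (f2 * m ^ 2 + f1 * m + f0) ^ 2 + \<beta> * (f2 * m ^ 2 + f1 * m + f0) + \<gamma> * m ^ 2 + \<delta> * m"
    and cong: "\<And>m. m \<in> {1..4} \<Longrightarrow> N dvd D m - D 0"
  shows "N dvd f2 ^ 2" "N dvd f2 * f1"
proof -
  have fourth_difference:
    "24 * \<alpha> * f2 ^ 2 = (D 4 - D 0) - 4 * (D 3 - D 0) + 6 * (D 2 - D 0) - 4 * (D 1 - D 0)"
    unfolding D by (simp add: algebra_simps power2_eq_square power4_eq_xxxx)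
  have third_difference:
    "12 * \<alpha> * (f2 * f1) + 36 * \<alpha> * f2 ^ 2 = (D 3 - D 0) - 3 * (D 2 - D 0) + 3 * (D 1 - D 0)"
    unfolding D by (simp add: algebra_simps power2_eq_square)
  have "coprime 2 N" "coprime 3 N"
    using assms(2) coprime_mult_left_iff[of 2 3 N] by simp_all
  then have "coprime (2 ^ 3 * 3) N" "coprime (2 ^ 2 * 3) N"
    by (simp_all only: coprime_mult_left_iff coprime_power_left_iff simp_thms)
  then have coprime_24: "coprime (24 * \<alpha>) N" and coprime_12: "coprime (12 * \<alpha>) N"
    using assms(1) by simp_all
  have "N dvd 24 * \<alpha> * f2 ^ 2"
    unfolding fourth_difference by (intro dvd_diff dvd_add dvd_mult cong) auto
  then show f2_sq: "N dvd f2 ^ 2"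
    using coprime_24 by (simp add: coprime_commute coprime_dvd_mult_right_iff mult.assoc)
  have "N dvd 12 * \<alpha> * (f2 * f1) + 36 * \<alpha> * f2 ^ 2"
    unfolding third_difference by (intro dvd_diff dvd_add dvd_mult cong) auto
  moreover have "N dvd 36 * \<alpha> * f2 ^ 2"
    using f2_sq by simp
  ultimately have "N dvd 12 * \<alpha> * (f2 * f1)"
    by (simp add: dvd_add_left_iff)
  then show "N dvd f2 * f1"
    using coprime_12 by (simp add: coprime_commute coprime_dvd_mult_right_iff mult.assoc)
qed

lemma qpoly_bij_not_dvd_linear_coeff:
  fixes p N :: nat and f2 f1 f0 :: int
  assumes "prime p" "p dvd N" "N > 0" "bij_betw (qpoly N f2 f1 f0) {..<N} {..<N}"
    and "int p dvd f2"
  shows "\<not> int p dvd f1"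
proof
  assume "int p dvd f1"
  then have p_dvd: "int p dvd f2 * int k ^ 2 + f1 * int k" for k
    using assms(5) by simp
  have "nat ((f0 + 1) mod int N) \<in> qpoly N f2 f1 f0 ` {..<N}"
    using assms(3,4) unfolding bij_betw_def by (simp add: nat_less_iff)
  then obtain k where "nat ((f2 * int k ^ 2 + f1 * int k + f0) mod int N) = nat ((f0 + 1) mod int N)"
    unfolding qpoly_def by auto
  then have "(f2 * int k ^ 2 + f1 * int k + f0) mod int N = (f0 + 1) mod int N"
    using assms(3) by (simp add: eq_nat_nat_iff)
  then have "int N dvd (f2 * int k ^ 2 + f1 * int k + f0) - (f0 + 1)"
    by (rule mod_eq_dvd_iff[THEN iffD1])
  then have "int N dvd (f2 * int k ^ 2 + f1 * int k) - 1"
    by (simp add: diff_diff_eq[symmetric])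
  moreover have "int p dvd int N"
    using assms(2) by simp
  ultimately have "int p dvd (f2 * int k ^ 2 + f1 * int k) - 1"
    by (rule dvd_trans[rotated])
  with p_dvd[of k] have "int p dvd (f2 * int k ^ 2 + f1 * int k) - ((f2 * int k ^ 2 + f1 * int k) - 1)"
    by (rule dvd_diff)
  then have "int p dvd 1"
    by simp
  then show False
    using assms(1) by simp
qed

lemma qpoly_bij_dvd_leading_coeff:
  fixes p n N :: nat and f2 f1 f0 :: int
  assumes "prime p" "N = p ^ n" "bij_betw (qpoly N f2 f1 f0) {..<N} {..<N}"
    and "int N dvd f2 ^ 2" "int N dvd f2 * f1"
  shows "int N dvd f2"
proof (cases "n = 0")
  case True
  then show ?thesis
    using assms(2) by simp
next
  case False
  then have "p dvd N"
    using assms(2) by simp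
  moreover have "N > 0"
    using assms(1,2) by (simp add: prime_gt_0_nat)
  moreover have "int p dvd f2"
  proof -
    have "int p dvd f2 ^ 2"
      using \<open>p dvd N\<close> assms(4) by (simp add: dvd_trans[of "int p" "int N"])
    then show ?thesis
      using assms(1) prime_dvd_power[of "int p"] by simp
  qed
  ultimately have "\<not> int p dvd f1"
    using qpoly_bij_not_dvd_linear_coeff assms(1,3) by blast
  then have "coprime (int N) f1"
    using assms(1,2) by (simp add: prime_imp_coprime)
  then show ?thesis
    using assms(5) by (simp add: coprime_dvd_mult_left_iff)
qed

lemma chirp_comp_qpoly_dvd_coeffs:
  fixes N :: nat and f2 f1 f0 :: int
  assumes "coprime 6 (int N)" "4 < N"
    and "is_chirp N g" "is_chirp N h" "\<forall>k<N. g (qpoly N f2 f1 f0 k) = h k"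
  shows "int N dvd f2 ^ 2" "int N dvd f2 * f1"
proof -
  have N: "odd N" "N > 0"
    using assms(1,2) odd_if_coprime_6 by auto
  obtain c A B where c: "cmod c = 1" and A: "coprime A (int N)" and AB: "even (A + B)"
    and g: "\<forall>k<N. g k = c * xi_half N (A * int k ^ 2 + B * int k)"
    using assms(3) unfolding is_chirp_def by blast
  obtain c' A' B' where h: "\<forall>k<N. h k = c' * xi_half N (A' * int k ^ 2 + B' * int k)"
    using assms(4) unfolding is_chirp_def by blast
  define P where "P m = f2 * m ^ 2 + f1 * m + f0" for m :: int
  define D where "D m = A * P m ^ 2 + B * P m + (- A') * m ^ 2 + (- B') * m" for m :: int
  have proportional: "xi_half N (A * P (int k) ^ 2 + B * P (int k))
      = (cnj c * c') * xi_half N (A' * int k ^ 2 + B' * int k)" if "k < N" for k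
  proof -
    have eq: "c * xi_half N (A * P (int k) ^ 2 + B * P (int k)) = c' * xi_half N (A' * int k ^ 2 + B' * int k)"
      using chirp_at_mod[OF N(1) AB g] assms(5) h that unfolding qpoly_def P_def by simp
    have "cnj c * c = 1"
      using c complex_norm_square[of c] by (simp add: mult.commute)
    then have "xi_half N (A * P (int k) ^ 2 + B * P (int k))
        = cnj c * c * xi_half N (A * P (int k) ^ 2 + B * P (int k))"
      by simp
    also have "\<dots> = (cnj c * c') * xi_half N (A' * int k ^ 2 + B' * int k)"
      by (simp only: mult.assoc eq)
    finally show ?thesis .
  qed
  have two_N_dvd: "2 * int N dvd D (int k) - D 0" if "k < N" for k
    using xi_half_proportional_dvd[OF N(2) proportional[OF that] proportional[of 0]] N(2)
    unfolding D_def by (simp add: algebra_simps)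
  have "int N dvd D m - D 0" if "m \<in> {1..4}" for m
  proof -
    have "nat m < N" "int (nat m) = m"
      using that assms(2) by auto
    then have "2 * int N dvd D m - D 0"
      using two_N_dvd by metis
    then show ?thesis
      by (rule dvd_mult_right)
  qed
  then show "int N dvd f2 ^ 2" "int N dvd f2 * f1"
    using quartic_congruences_dvd_coeffs[OF A assms(1) D_def[unfolded P_def]] by auto
qed

lemma chirp_comp_qpoly_not_chirp:
  fixes p n N :: nat and f2 f1 f0 :: int
  assumes "prime p" "5 \<le> p" "N = p ^ n" "f2 mod int N \<noteq> 0"
    and "bij_betw (qpoly N f2 f1 f0) {..<N} {..<N}"
    and "is_chirp N g" "is_chirp N h"
  shows "\<not> (\<forall>k<N. g (qpoly N f2 f1 f0 k) = h k)"
proof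
  assume comp: "\<forall>k<N. g (qpoly N f2 f1 f0 k) = h k"
  have coprime_6: "coprime 6 (int N)"
    using coprime_6_prime_power[OF assms(1,2)] assms(3) by simp
  have "n \<noteq> 0"
    using assms(3,4) by (intro notI) simp
  then have "p \<le> N"
    unfolding assms(3) using assms(2) by (intro self_le_power) auto
  with assms(2) have "4 < N"
    by simp
  have "int N dvd f2"
    using chirp_comp_qpoly_dvd_coeffs[OF coprime_6 \<open>4 < N\<close> assms(6,7) comp]
    by (rule qpoly_bij_dvd_leading_coeff[OF assms(1,3,5)])
  with assms(4) show False
    by (simp add: dvd_eq_mod_eq_0)
qed

theorem proposition3:
  fixes p n N :: nat and u l f2 f1 f0 :: int
  assumes "prime p" and "p \<ge> 5" and "n \<ge> 2" and "N = p ^ n"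
    and "coprime u (int N)"
    and "f2 mod int N \<noteq> 0"
    and "bij_betw (qpoly N f2 f1 f0) {..<N} {..<N}"
  shows "(\<forall>t. is_zc N t \<longrightarrow> \<not> in_class N t (\<lambda>k. zc N u l (qpoly N f2 f1 f0 k)))
       \<and> (\<forall>t. is_zc N t \<longrightarrow> \<not> in_class N t (\<lambda>k. zc N u l (perm_inv N (qpoly N f2 f1 f0) k)))"
proof -
  let ?\<pi> = "qpoly N f2 f1 f0"
  have "coprime 6 (int N)"
    using coprime_6_prime_power[OF assms(1,2)] assms(4) by simp
  then have odd: "odd N"
    by (rule odd_if_coprime_6)
  have zc: "is_chirp N (zc N u l)"
    using zc_chirp[OF odd assms(5)] .
  have class_chirp: "is_chirp N y" if "is_zc N t" "in_class N t y" for t y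
    using in_class_chirp[OF odd that(2) is_zc_chirp[OF odd that(1)]] .
  have inv: "perm_inv N ?\<pi> (?\<pi> k) = k" if "k < N" for k
    using assms(7) that unfolding perm_inv_def by (simp add: bij_betw_imp_inj_on the_inv_into_f_f)
  note no_chirp_comp = chirp_comp_qpoly_not_chirp[OF assms(1,2,4,6,7)]
  show ?thesis
  proof (intro conjI allI impI notI)
    fix t
    assume "is_zc N t" "in_class N t (\<lambda>k. zc N u l (?\<pi> k))"
    from no_chirp_comp[OF zc class_chirp[OF this]] show False
      by simp
  next
    fix t
    assume "is_zc N t" "in_class N t (\<lambda>k. zc N u l (perm_inv N ?\<pi> k))"
    from no_chirp_comp[OF class_chirp[OF this] zc] show False
      using inv by simp
  qed
qed

end
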